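(* Let $w$ be an infinite word on an alphabet $\mathcal{A}$ having infinitely many palindromic prefixes, and let $(n_i)_{i\ge1}$ be the increasing sequence of the lengths of its palindromic prefixes ($n_1=0$). The following are equivalent: (i) $n_{i+1}\le 2n_i+1$ for all $i\ge1$; (ii) there is an admissible function $\psi$ such that $w=w_\psi$.
   Context: The alphabet $\mathcal{A}$ (finite or infinite) is disjoint from $\mathbb{N}^*=\{1,2,\dots\}$; the empty word $\varepsilon$ is a palindrome. An admissible function is a map $\psi:\mathbb{N}^*\to\mathbb{N}^*\sqcup\mathcal{A}$ such that for every $n\ge1$ either $\psi(n)\in\mathcal{A}$ or $1\le\psi(n)\le n-1$. With it associate finite words $\pi_1=\varepsilon$ and, for $i\ge1$: if $\psi(i)\in\mathcal{A}$, $\pi_{i+1}=\pi_i\,\psi(i)\,\pi_i$; if $\psi(i)\in\mathbb{N}^*$, then $\pi_{\psi(i)}$ is a prefix of $\pi_i$, and writing $\pi_i=\pi_{\psi(i)}b_i$ one sets $\pi_{i+1}=\pi_i b_i$ (denoted $\pi_i\pi_{\psi(i)}^{-1}\pi_i$). Each $\pi_i$ is a palindrome and a proper prefix of $\pi_{i+1}$; $w_\psi$ denotes the infinite word having every $\pi_i$ as a prefix. *)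

theory Defs
  imports Main "HOL-Library.Infinite_Set"
begin

text \<open>The codomain N* disjoint-union A of an admissible function is modelled as nat + 'a:
  Inl k stands for the integer k, Inr a for the letter a. The value at 0 is irrelevant
  (the domain is N* = {1,2,...}).\<close>

definition admissible :: "(nat \<Rightarrow> nat + 'a) \<Rightarrow> bool" where
  "admissible \<psi> \<longleftrightarrow> (\<forall>n\<ge>1. case \<psi> n of Inr a \<Rightarrow> True | Inl k \<Rightarrow> 1 \<le> k \<and> k \<le> n - 1)"

text \<open>pal psi i is the word pi_i (for i >= 1). pi_{i+1} = pi_i (pi_{psi i})^{-1} pi_i is
  pi_i followed by the suffix b_i of pi_i with pi_i = pi_{psi i} b_i. The guard only matters for
  non-admissible psi.\<close>

function pal :: "(nat \<Rightarrow> nat + 'a) \<Rightarrow> nat \<Rightarrow> 'a list" where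
  "pal \<psi> 0 = []"
| "pal \<psi> (Suc 0) = []"
| "pal \<psi> (Suc (Suc i)) =
     (case \<psi> (Suc i) of
        Inr a \<Rightarrow> pal \<psi> (Suc i) @ [a] @ pal \<psi> (Suc i)
      | Inl k \<Rightarrow> (if 1 \<le> k \<and> k \<le> i
                  then pal \<psi> (Suc i) @ drop (length (pal \<psi> k)) (pal \<psi> (Suc i))
                  else pal \<psi> (Suc i)))"
  by pat_completeness auto
termination by (relation "measure (\<lambda>(\<psi>, n). n)") auto

text \<open>w_psi: the infinite word having every pi_i as a prefix.\<close>

definition w_psi :: "(nat \<Rightarrow> nat + 'a) \<Rightarrow> nat \<Rightarrow> 'a" where
  "w_psi \<psi> j = pal \<psi> (LEAST i. j < length (pal \<psi> i)) ! j"

definition pal_prefix :: "(nat \<Rightarrow> 'a) \<Rightarrow> nat \<Rightarrow> bool" where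
  "pal_prefix w n \<longleftrightarrow> (\<forall>j<n. w j = w (n - 1 - j))"

end

theory Submission
  imports Defs "HOL-Library.Sublist"
begin

(* The words pal psi i of an admissible psi are palindromes, each a prefix of the next, of
   strictly increasing length, and each at most one letter more than twice as long as its
   predecessor; so every n is followed by some length |pal psi m| in ]n, 2n+1], which is a
   palindromic prefix length of w_psi. Conversely, let p < q be consecutive palindromic prefix
   lengths of w with q <= 2p+1 and write u, uc for the prefixes of length p, q. If q = 2p+1
   then c = a u for the letter a = w p. Otherwise |c| <= |u|, and comparing u c = rev c u
   with u = rev u gives u = x c for a palindrome x, itself a palindromic prefix of length
   2p-q; so uc = u (x^-1 u). Reading off the letter a or the index of x step by step
   defines psi with w = w_psi. *)

lemma rev_append_drop_prefix:
  assumes "rev u = u" and "rev v = v" and "prefix u v"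
  shows "rev (v @ drop (length u) v) = v @ drop (length u) v"
proof -
  from \<open>prefix u v\<close> obtain c where v: "v = u @ c" by (auto simp: prefix_def)
  have v': "v = rev c @ u" using v assms(1,2) by (metis rev_append)
  have "rev (v @ c) = rev c @ v" using assms(2) by simp
  also have "\<dots> = v @ c" using v v' by (metis append_assoc)
  finally show ?thesis using v by simp
qed

lemma palindrome_overlap:
  assumes u: "rev u = u" and uc: "rev (u @ c) = u @ c" and len: "length c \<le> length u"
  obtains x where "u = x @ c" and "rev x = x"
proof -
  have eq: "u @ c = rev c @ u" using uc u by (metis rev_append)
  then obtain x where x: "u = rev c @ x"
    using len by (metis append_eq_append_conv_if append_take_drop_id length_rev)
  have "rev c @ x @ c = rev c @ rev c @ x" using eq x by simp
  then have xc: "x @ c = u" using x by simp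
  have "rev x @ c = u" using u x by (metis rev_append rev_rev_ident)
  then have "rev x = x" using xc by (metis append_same_eq)
  from xc[symmetric] this show ?thesis by (rule that)
qed

lemma palindrome_append_Suc_length:
  assumes u: "rev u = u" and uc: "rev (u @ c) = u @ c" and len: "length c = Suc (length u)"
  shows "c = hd c # u"
proof -
  have "u @ c = rev c @ u" using uc u by (metis rev_append)
  then have "c = drop (length u) (rev c) @ u"
    using len by (simp add: append_eq_append_conv_if)
  moreover have "length (drop (length u) (rev c)) = 1" using len by simp
  then obtain a where "drop (length u) (rev c) = [a]"
    by (cases "drop (length u) (rev c)") auto
  ultimately show ?thesis by simp
qed

lemma pal_prefix_iff_rev: "pal_prefix w n \<longleftrightarrow> rev (map w [0..<n]) = map w [0..<n]"
proof -
  have "rev (map w [0..<n]) = map w [0..<n] \<longleftrightarrow> (\<forall>j<n. w (n - 1 - j) = w j)"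
    unfolding list_eq_iff_nth_eq by (simp add: rev_nth)
  also have "\<dots> \<longleftrightarrow> pal_prefix w n"
    unfolding pal_prefix_def by (simp only: eq_commute)
  finally show ?thesis ..
qed

lemma map_upt_append:
  assumes "p \<le> q"
  shows "map w [0..<q] = map w [0..<p] @ map w [p..<q]"
  using upt_add_eq_append[of 0 p "q - p"] assms by simp

lemma pal_prefix_overlap:
  assumes p: "pal_prefix w p" and q: "pal_prefix w q" and "p \<le> q" and "q \<le> 2 * p"
  shows "pal_prefix w (2 * p - q)" and "map w [p..<q] = map w [2 * p - q..<p]"
proof -
  let ?u = "map w [0..<p]" and ?c = "map w [p..<q]"
  have "rev ?u = ?u" using p unfolding pal_prefix_iff_rev .
  moreover have "rev (?u @ ?c) = ?u @ ?c"
    using q unfolding pal_prefix_iff_rev map_upt_append[OF \<open>p \<le> q\<close>] .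
  moreover have "length ?c \<le> length ?u" using \<open>q \<le> 2 * p\<close> by simp
  ultimately obtain x where u: "?u = x @ ?c" and x: "rev x = x" by (rule palindrome_overlap)
  have lx: "length x = 2 * p - q" using arg_cong[OF u, of length] \<open>p \<le> q\<close> by simp
  have "x = take (2 * p - q) ?u" using u lx by simp
  then have "x = map w [0..<2 * p - q]" using \<open>p \<le> q\<close> by (simp add: take_map)
  with x show "pal_prefix w (2 * p - q)" by (simp add: pal_prefix_iff_rev)
  have "?c = drop (2 * p - q) ?u" using u lx by simp
  then show "map w [p..<q] = map w [2 * p - q..<p]" by (simp add: drop_map)
qed

lemma pal_prefix_Suc_double:
  assumes p: "pal_prefix w p" and q: "pal_prefix w (2 * p + 1)"
  shows "map w [p..<2 * p + 1] = w p # map w [0..<p]"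
proof -
  let ?u = "map w [0..<p]" and ?c = "map w [p..<2 * p + 1]"
  have "p \<le> 2 * p + 1" by simp
  have "rev ?u = ?u" using p unfolding pal_prefix_iff_rev .
  moreover have "rev (?u @ ?c) = ?u @ ?c"
    using q unfolding pal_prefix_iff_rev map_upt_append[OF \<open>p \<le> 2 * p + 1\<close>] .
  moreover have "length ?c = Suc (length ?u)" by simp
  ultimately have "?c = hd ?c # ?u" by (rule palindrome_append_Suc_length)
  then show ?thesis by (simp del: upt_Suc add: upt_conv_Cons)
qed

(* Indexed from 0: pal_prefix_lengths w i is the paper's n_(i+1). *)
abbreviation pal_prefix_lengths :: "(nat \<Rightarrow> 'a) \<Rightarrow> nat \<Rightarrow> nat" where
  "pal_prefix_lengths w \<equiv> enumerate {n. pal_prefix w n}"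

lemma pal_prefix_lengths_0: "pal_prefix_lengths w 0 = 0"
  by (simp add: enumerate_0 pal_prefix_def)

lemma enumerate_Suc_le:
  fixes S :: "nat set"
  assumes S: "infinite S" and next_in_S: "\<And>n. n \<in> S \<Longrightarrow> \<exists>m\<in>S. n < m \<and> m \<le> f n"
  shows "enumerate S (Suc i) \<le> f (enumerate S i)"
proof -
  obtain m where "m \<in> S" and m: "enumerate S i < m" "m \<le> f (enumerate S i)"
    using next_in_S enumerate_in_set[OF S] by blast
  moreover obtain k where k: "enumerate S k = m" using enumerate_Ex[OF S \<open>m \<in> S\<close>] by blast
  ultimately have "enumerate S i < enumerate S k" by simp
  then have "i < k" using S by simp
  then have "enumerate S (Suc i) \<le> enumerate S k" using S by simp
  with k m show ?thesis by simp
qed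

lemma prefix_pal_Suc: "prefix (pal \<psi> n) (pal \<psi> (Suc n))"
  by (cases n) (auto split: sum.split)

lemma prefix_pal_mono:
  assumes "k \<le> m"
  shows "prefix (pal \<psi> k) (pal \<psi> m)"
  using assms
proof (induction m rule: dec_induct)
  case (step m)
  then show ?case using prefix_pal_Suc prefix_order.trans by blast
qed simp

lemma rev_pal: "rev (pal \<psi> n) = pal \<psi> n"
proof (induction \<psi> n rule: pal.induct)
  case (3 \<psi> i)
  show ?case
  proof (cases "\<psi> (Suc i)")
    case (Inl k)
    then show ?thesis
      using 3 rev_append_drop_prefix[OF _ _ prefix_pal_mono, of \<psi> k "Suc i"] by simp
  qed (use 3 in simp)
qed simp_all

lemma admissible_Inl:
  assumes "admissible \<psi>" and "\<psi> (Suc n) = Inl k"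
  shows "1 \<le> k" and "k \<le> n"
  using assms unfolding admissible_def by (metis diff_Suc_1 le_add1 plus_1_eq_Suc sum.simps(5))+

lemma length_pal_Suc_less:
  assumes "admissible \<psi>"
  shows "length (pal \<psi> (Suc n)) < length (pal \<psi> (Suc (Suc n)))"
proof (induction n)
  case 0
  show ?case using admissible_Inl[OF assms, of 0] by (cases "\<psi> (Suc 0)") auto
next
  case (Suc n)
  show ?case
  proof (cases "\<psi> (Suc (Suc n))")
    case (Inl k)
    note k = admissible_Inl[OF assms Inl]
    then have "length (pal \<psi> k) < length (pal \<psi> (Suc (Suc n)))"
      using Suc prefix_length_le[OF prefix_pal_mono[OF k(2), of \<psi>]] by linarith
    with Inl k show ?thesis by simp
  qed simp
qed

lemma length_pal_Suc_Suc_le: "length (pal \<psi> (Suc (Suc n))) \<le> 2 * length (pal \<psi> (Suc n)) + 1"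
  by (auto split: sum.split)

lemma length_pal_Suc_ge:
  assumes "admissible \<psi>"
  shows "n \<le> length (pal \<psi> (Suc n))"
proof (induction n)
  case (Suc n)
  then show ?case using length_pal_Suc_less[OF assms, of n] by linarith
qed simp

lemma w_psi_nth:
  assumes "j < length (pal \<psi> m)"
  shows "w_psi \<psi> j = pal \<psi> m ! j"
proof -
  define i where "i = (LEAST i. j < length (pal \<psi> i))"
  have "i \<le> m" and j: "j < length (pal \<psi> i)"
    unfolding i_def using assms by (auto intro: Least_le LeastI)
  then obtain b where "pal \<psi> m = pal \<psi> i @ b"
    using prefix_pal_mono[of i m \<psi>] by (auto simp: prefix_def)
  with j show ?thesis unfolding w_psi_def i_def[symmetric] by (simp add: nth_append)
qed

lemma map_w_psi_upt_length_pal: "map (w_psi \<psi>) [0..<length (pal \<psi> m)] = pal \<psi> m"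
  by (rule nth_equalityI) (simp_all add: w_psi_nth)

lemma pal_prefix_w_psi_length_pal: "pal_prefix (w_psi \<psi>) (length (pal \<psi> m))"
  unfolding pal_prefix_iff_rev map_w_psi_upt_length_pal by (rule rev_pal)

lemma length_pal_between:
  assumes "admissible \<psi>"
  obtains m where "n < length (pal \<psi> m)" and "length (pal \<psi> m) \<le> 2 * n + 1"
proof -
  define m where "m = (LEAST m. n < length (pal \<psi> m))"
  have "n < length (pal \<psi> (Suc (Suc n)))" using length_pal_Suc_ge[OF assms, of "Suc n"] by simp
  then have m: "n < length (pal \<psi> m)" unfolding m_def by (rule LeastI)
  then obtain i where i: "m = Suc (Suc i)"
    by (cases "(\<psi>, m)" rule: pal.cases) auto
  then have "Suc i < m" by simp
  then have "\<not> n < length (pal \<psi> (Suc i))" unfolding m_def by (rule not_less_Least)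
  then have "length (pal \<psi> m) \<le> 2 * n + 1"
    unfolding i using length_pal_Suc_Suc_le[of \<psi> i] by linarith
  with m that show ?thesis by blast
qed

lemma pal_prefix_lengths_w_psi_Suc_le:
  assumes "admissible \<psi>"
  shows "pal_prefix_lengths (w_psi \<psi>) (Suc i) \<le> 2 * pal_prefix_lengths (w_psi \<psi>) i + 1"
proof (rule enumerate_Suc_le)
  have next_in_S: "\<exists>m\<in>{n. pal_prefix (w_psi \<psi>) n}. n < m \<and> m \<le> 2 * n + 1" for n
    using length_pal_between[OF assms] pal_prefix_w_psi_length_pal by blast
  then show "\<exists>m\<in>{n. pal_prefix (w_psi \<psi>) n}. n < m \<and> m \<le> 2 * n + 1" for n .
  show "infinite {n. pal_prefix (w_psi \<psi>) n}"
    unfolding infinite_nat_iff_unbounded using next_in_S by blast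
qed

(* With e = pal_prefix_lengths w, pal (psi_of_word w) (Suc m) will be the prefix of length e m,
   so Inl (Suc j) refers to the prefix of length e j; in the second branch that is the palindromic
   prefix of length 2 e (n - 1) - e n provided by pal_prefix_overlap, and inv e finds its index.
   The value at n = 0 is never used. *)
definition psi_of_word :: "(nat \<Rightarrow> 'a) \<Rightarrow> nat \<Rightarrow> nat + 'a" where
  "psi_of_word w n =
    (let e = pal_prefix_lengths w
     in if e n = 2 * e (n - 1) + 1 then Inr (w (e (n - 1)))
        else Inl (Suc (inv e (2 * e (n - 1) - e n))))"

context
  fixes w :: "nat \<Rightarrow> 'a"
  assumes infinite_pal_prefix: "infinite {n. pal_prefix w n}"
    and gap: "\<And>i. pal_prefix_lengths w (Suc i) \<le> 2 * pal_prefix_lengths w i + 1"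
begin

lemma pal_prefix_lengths_in: "pal_prefix w (pal_prefix_lengths w m)"
  using enumerate_in_set[OF infinite_pal_prefix] by simp

lemma pal_prefix_lengths_overlap:
  fixes m :: nat
  defines "p \<equiv> pal_prefix_lengths w m" and "q \<equiv> pal_prefix_lengths w (Suc m)"
  assumes "q \<noteq> 2 * p + 1"
  shows "pal_prefix_lengths w (inv (pal_prefix_lengths w) (2 * p - q)) = 2 * p - q"
    and "inv (pal_prefix_lengths w) (2 * p - q) < m"
    and "map w [p..<q] = map w [2 * p - q..<p]"
proof -
  have pq: "p < q" "q \<le> 2 * p"
    using gap[of m] assms(3) infinite_pal_prefix by (auto simp: p_def q_def)
  have "pal_prefix w p" "pal_prefix w q"
    unfolding p_def q_def by (rule pal_prefix_lengths_in)+
  note overlap = pal_prefix_overlap[OF this less_imp_le[OF pq(1)] pq(2)]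
  obtain j where "pal_prefix_lengths w j = 2 * p - q"
    using overlap(1) enumerate_Ex[OF infinite_pal_prefix] by auto
  then have "2 * p - q \<in> range (pal_prefix_lengths w)" by (metis rangeI)
  then show e_inv: "pal_prefix_lengths w (inv (pal_prefix_lengths w) (2 * p - q)) = 2 * p - q"
    by (rule f_inv_into_f)
  have "2 * p - q < pal_prefix_lengths w m" using pq unfolding p_def by linarith
  then show "inv (pal_prefix_lengths w) (2 * p - q) < m"
    using e_inv infinite_pal_prefix by (metis enumerate_mono_iff)
  show "map w [p..<q] = map w [2 * p - q..<p]" by (rule overlap(2))
qed

lemma pal_psi_of_word: "pal (psi_of_word w) (Suc m) = map w [0..<pal_prefix_lengths w m]"
proof (induction m rule: less_induct)
  case (less m)
  show ?case
  proof (cases m)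
    case 0
    then show ?thesis using pal_prefix_lengths_0 by simp
  next
    case (Suc t)
    let ?e = "pal_prefix_lengths w"
    have IH: "pal (psi_of_word w) (Suc t) = map w [0..<?e t]" using less Suc by simp
    have upt_split: "map w [0..<?e m] = map w [0..<?e t] @ map w [?e t..<?e m]"
      using Suc infinite_pal_prefix by (intro map_upt_append) simp
    show ?thesis
    proof (cases "?e m = 2 * ?e t + 1")
      case True
      then have "psi_of_word w (Suc t) = Inr (w (?e t))"
        by (simp add: psi_of_word_def Let_def Suc)
      moreover have "map w [?e t..<?e m] = w (?e t) # map w [0..<?e t]"
        unfolding True by (rule pal_prefix_Suc_double[OF pal_prefix_lengths_in[of t]
              pal_prefix_lengths_in[of m, unfolded True]])
      ultimately show ?thesis using IH upt_split Suc by simp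
    next
      case False
      let ?j = "inv ?e (2 * ?e t - ?e m)"
      note overlap = pal_prefix_lengths_overlap[of t, folded Suc, OF False]
      have "psi_of_word w (Suc t) = Inl (Suc ?j)"
        using False unfolding Suc by (simp add: psi_of_word_def Let_def)
      moreover have "pal (psi_of_word w) (Suc ?j) = map w [0..<2 * ?e t - ?e m]"
        using less overlap(1,2) Suc by simp
      ultimately show ?thesis using IH upt_split overlap Suc by (simp add: drop_map)
    qed
  qed
qed

lemma admissible_psi_of_word: "admissible (psi_of_word w)"
  unfolding admissible_def
proof (intro allI impI)
  fix n :: nat
  assume "1 \<le> n"
  then obtain m where n: "n = Suc m" by (cases n) auto
  show "case psi_of_word w n of Inr a \<Rightarrow> True | Inl k \<Rightarrow> 1 \<le> k \<and> k \<le> n - 1"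
    using pal_prefix_lengths_overlap(2)[of m] by (auto simp: psi_of_word_def Let_def n)
qed

lemma w_psi_psi_of_word: "w_psi (psi_of_word w) = w"
proof
  fix j
  have "j < pal_prefix_lengths w (Suc j)"
    using le_enumerate[OF infinite_pal_prefix, of "Suc j"] by simp
  then have j: "j < length (pal (psi_of_word w) (Suc (Suc j)))"
    by (simp del: pal.simps add: pal_psi_of_word)
  show "w_psi (psi_of_word w) j = w j"
    using w_psi_nth[OF j] \<open>j < pal_prefix_lengths w (Suc j)\<close>
    by (simp del: pal.simps add: pal_psi_of_word)
qed

end

theorem theorem4p2:
  fixes w :: "nat \<Rightarrow> 'a"
  assumes "infinite {n. pal_prefix w n}"
  shows "(\<forall>i. enumerate {n. pal_prefix w n} (Suc i) \<le> 2 * enumerate {n. pal_prefix w n} i + 1)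
     \<longleftrightarrow> (\<exists>\<psi> :: nat \<Rightarrow> nat + 'a. admissible \<psi> \<and> w = w_psi \<psi>)"
proof
  assume "\<forall>i. enumerate {n. pal_prefix w n} (Suc i) \<le> 2 * enumerate {n. pal_prefix w n} i + 1"
  then have "admissible (psi_of_word w)" and "w_psi (psi_of_word w) = w"
    using admissible_psi_of_word[OF assms] w_psi_psi_of_word[OF assms] by blast+
  then show "\<exists>\<psi> :: nat \<Rightarrow> nat + 'a. admissible \<psi> \<and> w = w_psi \<psi>" by metis
next
  assume "\<exists>\<psi> :: nat \<Rightarrow> nat + 'a. admissible \<psi> \<and> w = w_psi \<psi>"
  then show "\<forall>i. enumerate {n. pal_prefix w n} (Suc i) \<le> 2 * enumerate {n. pal_prefix w n} i + 1"
    using pal_prefix_lengths_w_psi_Suc_le by blast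
qed

end
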